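(* Let $\mathcal G$ satisfy the Compactness, Convexity, Continuity and Symmetry assumptions. Then for every constant $M\ge0$, \[ \inf_{W\in\mathbb R^n}\sup_{g\in\mathcal G}J_\lambda(W,g)\le\sup_{g\in\mathcal G}\inf_{\|W\|\le M}B(W,g)^2+\frac{\lambda}{n^2}M^2 . \]
   Context: Setting: finite state space $\mathcal S$, actions $[m]$, confounder space $\mathcal U$; data $Z_i=(S_i,A_i,S_i')$, $i\in[n]$, with unobserved confounders $U_i$; $\pi_e(a\mid s,u)$ an evaluation policy; $d(S)$ the stationary state density ratio; conditional expectations are under the behavior stationary distribution. For $W\in\mathbb R^n$ and $g=(g_1,\dots,g_m)$, $g_a:\mathcal S\times\mathcal U\to\mathbb R$: $f_{ia}=W_i\delta_{A_ia}-d(S_i)\pi_e(a\mid S_i,U_i)$, $B(W,g)=\frac1n\sum_i\sum_a\mathbb E[f_{ia}g_a(S_i,U_i)\mid Z_i]$, $J_\lambda(W,g)=B(W,g)^2+\frac{\lambda}{n^2}\|W\|^2$ with $\lambda\ge0$. $\mathcal G$ is a normed class of such $g$, $\mathcal G^*=\{g/\|g\|:g\in\mathcal G,\|g\|>0\}$, $h_g(z)=\mathbb E[g_A(S,U)\mid Z=z]$, $k_g(z)=\mathbb E[d(S)\sum_a\pi_e(a\mid S,U)g_a(S,U)\mid Z=z]$. Compactness: $\mathcal G$ and $\mathcal G^*$ compact. Convexity: $\mathcal G$ convex. Continuity: $h_g(z)$ and $k_g(z)$ continuous in $g$ for every $z$, and $g_a(s,u)$ continuous in $(s,u)$. Symmetry: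 $g\in\mathcal G\iff-g\in\mathcal G$. *)

theory Defs
  imports "HOL-Probability.Probability"
begin

(* Data point z = (s, a, s') : state, action, next state.
   Actions are indexed by {..<m}.
   A class element g (of an abstract normed space 'g) represents the tuple of functions
   (g_a)_{a<m} via the evaluation map evl:  g_a(s,u) = evl g a s u.
   K z is the conditional law of the unobserved confounder U given Z = z
   (under the behaviour stationary distribution), so E[phi(U) | Z = z] = integral over K z. *)

definition hfun :: "('g \<Rightarrow> nat \<Rightarrow> 's \<Rightarrow> 'u \<Rightarrow> real) \<Rightarrow> ('s \<times> nat \<times> 's \<Rightarrow> 'u measure)
    \<Rightarrow> 'g \<Rightarrow> 's \<times> nat \<times> 's \<Rightarrow> real" where
  "hfun evl K g z = (case z of (s, a, s') \<Rightarrow> \<integral>u. evl g a s u \<partial>K z)"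

definition kfun :: "('g \<Rightarrow> nat \<Rightarrow> 's \<Rightarrow> 'u \<Rightarrow> real) \<Rightarrow> ('s \<times> nat \<times> 's \<Rightarrow> 'u measure)
    \<Rightarrow> ('s \<Rightarrow> real) \<Rightarrow> (nat \<Rightarrow> 's \<Rightarrow> 'u \<Rightarrow> real) \<Rightarrow> nat
    \<Rightarrow> 'g \<Rightarrow> 's \<times> nat \<times> 's \<Rightarrow> real" where
  "kfun evl K d pe m g z =
     (case z of (s, a, s') \<Rightarrow> \<integral>u. d s * (\<Sum>b<m. pe b s u * evl g b s u) \<partial>K z)"

definition ffun :: "('s \<Rightarrow> real) \<Rightarrow> (nat \<Rightarrow> 's \<Rightarrow> 'u \<Rightarrow> real) \<Rightarrow> ('n \<Rightarrow> 's \<times> nat \<times> 's)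
    \<Rightarrow> real ^ 'n \<Rightarrow> 'n \<Rightarrow> nat \<Rightarrow> 'u \<Rightarrow> real" where
  "ffun d pe Z W i a u =
     W $ i * (if fst (snd (Z i)) = a then 1 else 0) - d (fst (Z i)) * pe a (fst (Z i)) u"

definition Bfun :: "('g \<Rightarrow> nat \<Rightarrow> 's \<Rightarrow> 'u \<Rightarrow> real) \<Rightarrow> ('s \<times> nat \<times> 's \<Rightarrow> 'u measure)
    \<Rightarrow> ('s \<Rightarrow> real) \<Rightarrow> (nat \<Rightarrow> 's \<Rightarrow> 'u \<Rightarrow> real) \<Rightarrow> nat \<Rightarrow> ('n::finite \<Rightarrow> 's \<times> nat \<times> 's)
    \<Rightarrow> real ^ 'n \<Rightarrow> 'g \<Rightarrow> real" where
  "Bfun evl K d pe m Z W g =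
     (1 / real CARD('n)) * (\<Sum>i\<in>UNIV. \<Sum>a<m.
        \<integral>u. ffun d pe Z W i a u * evl g a (fst (Z i)) u \<partial>K (Z i))"

definition Jfun :: "('g \<Rightarrow> nat \<Rightarrow> 's \<Rightarrow> 'u \<Rightarrow> real) \<Rightarrow> ('s \<times> nat \<times> 's \<Rightarrow> 'u measure)
    \<Rightarrow> ('s \<Rightarrow> real) \<Rightarrow> (nat \<Rightarrow> 's \<Rightarrow> 'u \<Rightarrow> real) \<Rightarrow> nat \<Rightarrow> ('n::finite \<Rightarrow> 's \<times> nat \<times> 's)
    \<Rightarrow> real \<Rightarrow> real ^ 'n \<Rightarrow> 'g \<Rightarrow> real" where
  "Jfun evl K d pe m Z lam W g =
     (Bfun evl K d pe m Z W g)\<^sup>2 + lam / (real CARD('n))\<^sup>2 * (norm W)\<^sup>2"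

definition normalized_class :: "'g::real_normed_vector set \<Rightarrow> 'g set" where
  "normalized_class G = (\<lambda>g. g /\<^sub>R norm g) ` {g \<in> G. norm g > 0}"

end

theory Submission
  imports Defs
begin

(* For g in G, B(W, g) = <W, a_g> - b_g is affine in W, and g \<mapsto> (a_g, b_g) is linear and
   continuous on G, so these coefficients range over a compact convex set A with A = -A.
   For a single point (a, b) the infimum of (<W, a> - b)^2 over the ball |W| \<le> M is
   max(0, |b| - M |a|)^2. If t^2 is the supremum of these values over A, then A misses the
   open convex region {(a, b). M |a| + b < -t}, and a hyperplane separating the two yields
   one W with |W| \<le> M and <W, a> - b \<le> t on all of A; by the symmetry of A also
   |<W, a> - b| \<le> t. *)

lemma nonpos_if_multiples_bounded:
  fixes x y :: real
  assumes "\<And>s. s > 0 \<Longrightarrow> s * x \<le> y"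
  shows "x \<le> 0"
proof (rule ccontr)
  assume "\<not> x \<le> 0"
  then have "x > 0" by simp
  have "((\<bar>y\<bar> + 1) / x) * x \<le> y" by (rule assms) (use \<open>x > 0\<close> in simp)
  with \<open>x > 0\<close> show False by simp
qed

lemma halfspace_containing_below_norm_cone:
  fixes u :: "'a::real_inner" and \<alpha> \<beta> M t :: real
  assumes "M \<ge> 0" and nonzero: "(u, \<alpha>) \<noteq> 0"
    and halfspace: "\<And>c b. M * norm c + b < - t \<Longrightarrow> inner u c + \<alpha> * b \<le> \<beta>"
  shows "\<alpha> > 0" "norm u \<le> M * \<alpha>" "- \<alpha> * t \<le> \<beta>"
proof -
  have "- \<alpha> \<le> 0"
  proof (rule nonpos_if_multiples_bounded)
    fix s :: real assume "s > 0"
    then have "\<alpha> * (- t - s) \<le> \<beta>" using halfspace[of 0 "- t - s"] by simp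
    then show "s * - \<alpha> \<le> \<beta> + \<alpha> * t" by (simp add: algebra_simps)
  qed
  have "norm u * (norm u - M * \<alpha>) \<le> 0"
  proof (rule nonpos_if_multiples_bounded)
    fix s :: real assume "s > 0"
    then have "inner u (s *\<^sub>R u) + \<alpha> * (- t - M * norm (s *\<^sub>R u) - 1) \<le> \<beta>"
      by (intro halfspace) simp
    with \<open>s > 0\<close> show "s * (norm u * (norm u - M * \<alpha>)) \<le> \<beta> + \<alpha> * t + \<alpha>"
      by (simp add: power2_norm_eq_inner[symmetric] power2_eq_square algebra_simps)
  qed
  then show norm_u: "norm u \<le> M * \<alpha>"
    using \<open>M \<ge> 0\<close> \<open>- \<alpha> \<le> 0\<close> by (cases "norm u = 0") (auto simp: mult_le_0_iff)
  show "\<alpha> > 0"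
  proof (rule ccontr)
    assume "\<not> \<alpha> > 0"
    then have "u = 0" "\<alpha> = 0" using norm_u \<open>- \<alpha> \<le> 0\<close> by auto
    with nonzero show False by (simp add: zero_prod_def)
  qed
  show "- \<alpha> * t \<le> \<beta>"
  proof (rule field_le_epsilon)
    fix e :: real assume "e > 0"
    with \<open>\<alpha> > 0\<close> have "\<alpha> * (- t - e / \<alpha>) \<le> \<beta>" by (intro halfspace[of 0, simplified]) simp
    with \<open>\<alpha> > 0\<close> show "- \<alpha> * t \<le> \<beta> + e" by (simp add: algebra_simps)
  qed
qed

lemma convex_below_norm_cone:
  assumes "M \<ge> 0"
  shows "convex {p :: 'a::real_normed_vector \<times> real. M * norm (fst p) + snd p < c}"
proof (rule convexI)
  fix x y :: "'a \<times> real" and u v :: real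
  assume x: "x \<in> {p. M * norm (fst p) + snd p < c}" and y: "y \<in> {p. M * norm (fst p) + snd p < c}"
    and uv: "0 \<le> u" "0 \<le> v" "u + v = 1"
  have "norm (u *\<^sub>R fst x + v *\<^sub>R fst y) \<le> u * norm (fst x) + v * norm (fst y)"
    using norm_triangle_ineq[of "u *\<^sub>R fst x" "v *\<^sub>R fst y"] uv by simp
  then have "M * norm (u *\<^sub>R fst x + v *\<^sub>R fst y) + (u * snd x + v * snd y)
      \<le> u * (M * norm (fst x) + snd x) + v * (M * norm (fst y) + snd y)"
    using mult_left_mono[OF _ \<open>M \<ge> 0\<close>] by (fastforce simp: algebra_simps)
  also have "\<dots> < c" using x y uv by (intro convex_bound_lt) auto
  finally show "u *\<^sub>R x + v *\<^sub>R y \<in> {p. M * norm (fst p) + snd p < c}" by simp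
qed

lemma minimax_affine_ball:
  fixes A :: "('a::euclidean_space \<times> real) set"
  assumes "convex A" "M \<ge> 0" and above_cone: "\<And>p. p \<in> A \<Longrightarrow> - t \<le> M * norm (fst p) + snd p"
  shows "\<exists>W. norm W \<le> M \<and> (\<forall>p\<in>A. inner W (fst p) - snd p \<le> t)"
proof (cases "A = {}")
  case True
  then show ?thesis using \<open>M \<ge> 0\<close> by (intro exI[of _ 0]) simp
next
  case False
  define S where "S = {p :: 'a \<times> real. M * norm (fst p) + snd p < - t}"
  have "(0, - t - 1) \<in> S" "S \<inter> A = {}" using above_cone by (fastforce simp: S_def)+
  then obtain w \<beta> where "w \<noteq> 0" and w_S: "\<forall>x\<in>S. inner w x \<le> \<beta>" and w_A: "\<forall>x\<in>A. \<beta> \<le> inner w x"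
    using separating_hyperplane_sets[of S A] convex_below_norm_cone[OF \<open>M \<ge> 0\<close>] \<open>convex A\<close> False
    unfolding S_def by blast
  obtain u \<alpha> where w: "w = (u, \<alpha>)" by fastforce
  have "\<alpha> > 0" "norm u \<le> M * \<alpha>" "- \<alpha> * t \<le> \<beta>"
    using halfspace_containing_below_norm_cone[of M u \<alpha> t \<beta>] \<open>M \<ge> 0\<close> \<open>w \<noteq> 0\<close> w_S
    unfolding w S_def by auto
  show ?thesis
  proof (intro exI conjI ballI)
    show "norm (- (1 / \<alpha>) *\<^sub>R u) \<le> M"
      using \<open>\<alpha> > 0\<close> \<open>norm u \<le> M * \<alpha>\<close> by (simp add: field_simps)
  next
    fix p assume "p \<in> A"
    then have "- \<alpha> * t \<le> inner u (fst p) + \<alpha> * snd p"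
      using w_A \<open>- \<alpha> * t \<le> \<beta>\<close> unfolding w by (cases p) fastforce
    with \<open>\<alpha> > 0\<close> show "inner (- (1 / \<alpha>) *\<^sub>R u) (fst p) - snd p \<le> t"
      by (simp add: field_simps)
  qed
qed

lemma sq_residual_lower_bound:
  fixes W c :: "'a::real_inner"
  assumes "norm W \<le> M"
  shows "(max 0 (\<bar>b\<bar> - M * norm c))\<^sup>2 \<le> (inner W c - b)\<^sup>2"
proof -
  have "\<bar>inner W c\<bar> \<le> M * norm c"
    using Cauchy_Schwarz_ineq2[of W c] mult_right_mono[OF assms norm_ge_zero[of c]] by linarith
  then have "max 0 (\<bar>b\<bar> - M * norm c) \<le> \<bar>inner W c - b\<bar>" by linarith
  then show ?thesis by (metis max.cobounded1 power2_abs power_mono)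
qed

lemma minimax_sq_affine_ball:
  fixes A :: "('a::euclidean_space \<times> real) set"
  assumes "compact A" "convex A" and symmetric: "\<And>p. p \<in> A \<Longrightarrow> - p \<in> A" and "M \<ge> 0"
  shows "\<exists>W. norm W \<le> M \<and> (\<forall>p\<in>A. (inner W (fst p) - snd p)\<^sup>2
           \<le> Sup ((\<lambda>p. Inf ((\<lambda>W. (inner W (fst p) - snd p)\<^sup>2) ` cball 0 M)) ` A))"
proof (cases "A = {}")
  case True
  then show ?thesis using \<open>M \<ge> 0\<close> by (intro exI[of _ 0]) simp
next
  case False
  then obtain p0 where "p0 \<in> A" by blast
  define Q :: "'a \<times> real \<Rightarrow> real"
    where "Q p = Inf ((\<lambda>W. (inner W (fst p) - snd p)\<^sup>2) ` cball 0 M)" for p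
  define R where "R = Sup (Q ` A)"
  obtain C where C: "\<And>p. p \<in> A \<Longrightarrow> \<bar>snd p\<bar> \<le> C"
    using compact_imp_bounded[OF \<open>compact A\<close>] norm_snd_le unfolding bounded_iff
    by (metis order_trans prod.collapse real_norm_def)
  have Q_lower: "(max 0 (\<bar>snd p\<bar> - M * norm (fst p)))\<^sup>2 \<le> Q p" for p
    unfolding Q_def using \<open>M \<ge> 0\<close> by (intro cInf_greatest) (auto intro: sq_residual_lower_bound)
  have Q_upper: "Q p \<le> C\<^sup>2" if "p \<in> A" for p
  proof -
    have "Q p \<le> (snd p)\<^sup>2"
      unfolding Q_def using \<open>M \<ge> 0\<close> by (intro cInf_lower bdd_belowI[of _ 0] rev_image_eqI[of 0]) auto
    also have "\<dots> \<le> C\<^sup>2" using power_mono[OF C[OF that] abs_ge_zero, of 2] by simp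
    finally show ?thesis .
  qed
  have Q_le_R: "Q p \<le> R" if "p \<in> A" for p
    unfolding R_def using that Q_upper by (intro cSup_upper bdd_aboveI2) auto
  have bound: "\<bar>snd p\<bar> - M * norm (fst p) \<le> sqrt R" if "p \<in> A" for p
    using real_le_rsqrt[OF order_trans[OF Q_lower Q_le_R[OF that]]] by linarith
  obtain W where "norm W \<le> M" and W: "\<And>p. p \<in> A \<Longrightarrow> inner W (fst p) - snd p \<le> sqrt R"
    using minimax_affine_ball[OF \<open>convex A\<close> \<open>M \<ge> 0\<close>, of "sqrt R"] bound by fastforce
  have "0 \<le> R" using Q_lower[of p0] Q_le_R[OF \<open>p0 \<in> A\<close>] by (meson order_trans zero_le_power2)
  have "(inner W (fst p) - snd p)\<^sup>2 \<le> R" if "p \<in> A" for p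
  proof -
    have "\<bar>inner W (fst p) - snd p\<bar> \<le> sqrt R"
      using W[OF that] W[OF symmetric[OF that]] by simp
    then show ?thesis using power_mono[OF _ abs_ge_zero, of _ "sqrt R" 2] \<open>0 \<le> R\<close> by simp
  qed
  then show ?thesis using \<open>norm W \<le> M\<close> unfolding R_def Q_def by blast
qed

lemma Inf_Sup_sq_affine_le_Sup_Inf_ball:
  fixes A :: "('a::euclidean_space \<times> real) set" and c M :: real
  assumes "compact A" "convex A" and "\<And>p. p \<in> A \<Longrightarrow> - p \<in> A" and "c \<ge> 0" "M \<ge> 0"
  shows "Inf (range (\<lambda>W. Sup ((\<lambda>p. (inner W (fst p) - snd p)\<^sup>2 + c * (norm W)\<^sup>2) ` A)))
    \<le> Sup ((\<lambda>p. Inf ((\<lambda>W. (inner W (fst p) - snd p)\<^sup>2) ` cball 0 M)) ` A) + c * M\<^sup>2"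
    (is "Inf (range (\<lambda>W. Sup (?J W ` A))) \<le> ?R + _")
proof (cases "A = {}")
  case True
  then show ?thesis using \<open>c \<ge> 0\<close> by simp
next
  case False
  then obtain p0 where "p0 \<in> A" by blast
  obtain W where "norm W \<le> M" and W: "\<And>p. p \<in> A \<Longrightarrow> (inner W (fst p) - snd p)\<^sup>2 \<le> ?R"
    using minimax_sq_affine_ball[OF assms(1-3,5)] by blast
  have J_bdd: "bdd_above (?J V ` A)" for V
    by (intro bounded_imp_bdd_above compact_imp_bounded compact_continuous_image \<open>compact A\<close>
        continuous_intros)
  have "c * (norm W)\<^sup>2 \<le> c * M\<^sup>2"
    using \<open>norm W \<le> M\<close> \<open>c \<ge> 0\<close> by (intro mult_left_mono power_mono) auto
  then have "Sup (?J W ` A) \<le> ?R + c * M\<^sup>2"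
    using False W by (intro cSup_least) (auto intro: add_mono)
  moreover have "bdd_below (range (\<lambda>V. Sup (?J V ` A)))"
  proof (rule bdd_belowI2)
    fix V
    have "0 \<le> ?J V p0" using \<open>c \<ge> 0\<close> by simp
    also have "\<dots> \<le> Sup (?J V ` A)" using \<open>p0 \<in> A\<close> J_bdd by (intro cSup_upper) auto
    finally show "0 \<le> Sup (?J V ` A)" .
  qed
  then have "Inf (range (\<lambda>V. Sup (?J V ` A))) \<le> Sup (?J W ` A)" by (intro cInf_lower) auto
  ultimately show ?thesis by linarith
qed

definition data_integrable :: "('g \<Rightarrow> nat \<Rightarrow> 's \<Rightarrow> 'u \<Rightarrow> real) \<Rightarrow> ('s \<times> nat \<times> 's \<Rightarrow> 'u measure)
    \<Rightarrow> (nat \<Rightarrow> 's \<Rightarrow> 'u \<Rightarrow> real) \<Rightarrow> nat \<Rightarrow> ('n \<Rightarrow> 's \<times> nat \<times> 's) \<Rightarrow> 'g \<Rightarrow> bool" where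
  "data_integrable evl K pe m Z g \<longleftrightarrow> (\<forall>i a. a < m \<longrightarrow>
     integrable (K (Z i)) (\<lambda>u. evl g a (fst (Z i)) u) \<and>
     integrable (K (Z i)) (\<lambda>u. pe a (fst (Z i)) u * evl g a (fst (Z i)) u))"

definition Bcoef :: "('g \<Rightarrow> nat \<Rightarrow> 's \<Rightarrow> 'u \<Rightarrow> real) \<Rightarrow> ('s \<times> nat \<times> 's \<Rightarrow> 'u measure)
    \<Rightarrow> ('s \<Rightarrow> real) \<Rightarrow> (nat \<Rightarrow> 's \<Rightarrow> 'u \<Rightarrow> real) \<Rightarrow> nat \<Rightarrow> ('n::finite \<Rightarrow> 's \<times> nat \<times> 's)
    \<Rightarrow> 'g \<Rightarrow> (real ^ 'n) \<times> real" where
  "Bcoef evl K d pe m Z g =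
     ((\<chi> i. hfun evl K g (Z i) / real CARD('n)),
      (\<Sum>i\<in>UNIV. kfun evl K d pe m g (Z i)) / real CARD('n))"

lemma sum_integral_ffun_eq:
  assumes "fst (snd (Z i)) < m" and "data_integrable evl K pe m Z g"
  shows "(\<Sum>a<m. \<integral>u. ffun d pe Z W i a u * evl g a (fst (Z i)) u \<partial>K (Z i))
    = W $ i * hfun evl K g (Z i) - kfun evl K d pe m g (Z i)"
proof -
  obtain s a0 s' where Zi: "Z i = (s, a0, s')" by (cases "Z i") auto
  have int: "integrable (K (Z i)) (evl g a s)" "integrable (K (Z i)) (\<lambda>u. pe a s u * evl g a s u)"
    if "a < m" for a
    using that spec[OF assms(2)[unfolded data_integrable_def], of i] by (simp_all add: Zi)
  have "(\<Sum>a<m. \<integral>u. ffun d pe Z W i a u * evl g a (fst (Z i)) u \<partial>K (Z i))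
      = (\<Sum>a<m. (if a = a0 then W $ i * (\<integral>u. evl g a s u \<partial>K (Z i)) else 0)
          - d s * (\<integral>u. pe a s u * evl g a s u \<partial>K (Z i)))"
  proof (rule sum.cong[OF refl])
    fix a assume "a \<in> {..<m}"
    have "(\<lambda>u. ffun d pe Z W i a u * evl g a (fst (Z i)) u)
        = (\<lambda>u. (if a = a0 then W $ i else 0) * evl g a s u - d s * (pe a s u * evl g a s u))"
      by (auto simp: ffun_def Zi algebra_simps)
    then show "(\<integral>u. ffun d pe Z W i a u * evl g a (fst (Z i)) u \<partial>K (Z i))
        = (if a = a0 then W $ i * (\<integral>u. evl g a s u \<partial>K (Z i)) else 0)
          - d s * (\<integral>u. pe a s u * evl g a s u \<partial>K (Z i))"
      using int \<open>a \<in> {..<m}\<close> by simp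
  qed
  also have "\<dots> = W $ i * hfun evl K g (Z i) - d s * (\<Sum>a<m. \<integral>u. pe a s u * evl g a s u \<partial>K (Z i))"
    using assms(1) by (simp add: sum_subtractf sum_distrib_left hfun_def Zi)
  also have "\<dots> = W $ i * hfun evl K g (Z i) - kfun evl K d pe m g (Z i)"
    using int by (simp add: kfun_def Zi integral_sum)
  finally show ?thesis .
qed

lemma Bfun_eq_inner_Bcoef:
  fixes Z :: "'n::finite \<Rightarrow> 's \<times> nat \<times> 's"
  assumes "\<And>i. fst (snd (Z i)) < m" and "data_integrable evl K pe m Z g"
  shows "Bfun evl K d pe m Z W g
    = inner W (fst (Bcoef evl K d pe m Z g)) - snd (Bcoef evl K d pe m Z g)"
proof -
  have "Bfun evl K d pe m Z W g
      = (\<Sum>i\<in>UNIV. W $ i * hfun evl K g (Z i) - kfun evl K d pe m g (Z i)) / real CARD('n)"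
    unfolding Bfun_def using sum_integral_ffun_eq[OF assms(1) assms(2)] by simp
  then show ?thesis
    by (simp add: Bcoef_def inner_vec_def sum_subtractf diff_divide_distrib sum_divide_distrib)
qed

lemma data_integrable_scaleR:
  assumes "\<And>a s u. linear (\<lambda>g. evl g a s u)" and "data_integrable evl K pe m Z g"
  shows "data_integrable evl K pe m Z (c *\<^sub>R g)"
  using assms(2) linear_scale[OF assms(1)]
  by (auto simp: data_integrable_def mult.left_commute[of _ c])

lemma hfun_scaleR:
  assumes "\<And>a s u. linear (\<lambda>g. evl g a s u)"
  shows "hfun evl K (c *\<^sub>R g) z = c * hfun evl K g z"
  using linear_scale[OF assms] by (simp add: hfun_def split: prod.split)

lemma hfun_add:
  assumes "\<And>a s u. linear (\<lambda>g. evl g a s u)"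
    and "integrable (K z) (evl g1 (fst (snd z)) (fst z))" "integrable (K z) (evl g2 (fst (snd z)) (fst z))"
  shows "hfun evl K (g1 + g2) z = hfun evl K g1 z + hfun evl K g2 z"
  using assms(2,3) linear_add[OF assms(1)] by (cases z rule: prod_cases3) (simp add: hfun_def)

lemma kfun_scaleR:
  assumes "\<And>a s u. linear (\<lambda>g. evl g a s u)"
  shows "kfun evl K d pe m (c *\<^sub>R g) z = c * kfun evl K d pe m g z"
proof (cases z rule: prod_cases3)
  case (fields s a s')
  have "(\<lambda>u. d s * (\<Sum>b<m. pe b s u * evl (c *\<^sub>R g) b s u))
      = (\<lambda>u. c * (d s * (\<Sum>b<m. pe b s u * evl g b s u)))"
    using linear_scale[OF assms] by (simp add: sum_distrib_left algebra_simps)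
  then show ?thesis unfolding kfun_def fields prod.case by simp
qed

lemma kfun_add:
  assumes "\<And>a s u. linear (\<lambda>g. evl g a s u)"
    and "\<And>b. b < m \<Longrightarrow> integrable (K z) (\<lambda>u. pe b (fst z) u * evl g1 b (fst z) u)"
    and "\<And>b. b < m \<Longrightarrow> integrable (K z) (\<lambda>u. pe b (fst z) u * evl g2 b (fst z) u)"
  shows "kfun evl K d pe m (g1 + g2) z = kfun evl K d pe m g1 z + kfun evl K d pe m g2 z"
proof (cases z rule: prod_cases3)
  case (fields s a s')
  have "integrable (K z) (\<lambda>u. d s * (\<Sum>b<m. pe b s u * evl g1 b s u))"
    "integrable (K z) (\<lambda>u. d s * (\<Sum>b<m. pe b s u * evl g2 b s u))"
    using assms(2,3) by (auto simp: fields intro!: integrable_mult_right integrable_sum)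
  moreover have "(\<lambda>u. d s * (\<Sum>b<m. pe b s u * evl (g1 + g2) b s u))
      = (\<lambda>u. d s * (\<Sum>b<m. pe b s u * evl g1 b s u) + d s * (\<Sum>b<m. pe b s u * evl g2 b s u))"
    using linear_add[OF assms(1)] by (simp add: distrib_left sum.distrib)
  ultimately show ?thesis
    unfolding kfun_def fields prod.case by (simp add: fields Bochner_Integration.integral_add)
qed

lemma Bcoef_scaleR:
  assumes "\<And>a s u. linear (\<lambda>g. evl g a s u)"
  shows "Bcoef evl K d pe m Z (c *\<^sub>R g) = c *\<^sub>R Bcoef evl K d pe m Z g"
  by (simp add: Bcoef_def hfun_scaleR[OF assms] kfun_scaleR[OF assms] vec_eq_iff sum_distrib_left)

lemma Bcoef_uminus:
  assumes "\<And>a s u. linear (\<lambda>g. evl g a s u)"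
  shows "Bcoef evl K d pe m Z (- g) = - Bcoef evl K d pe m Z g"
  using Bcoef_scaleR[OF assms, where c = "- 1"] by simp

lemma Bcoef_add:
  assumes "\<And>a s u. linear (\<lambda>g. evl g a s u)" and "\<And>i. fst (snd (Z i)) < m"
    and "data_integrable evl K pe m Z g1" "data_integrable evl K pe m Z g2"
  shows "Bcoef evl K d pe m Z (g1 + g2) = Bcoef evl K d pe m Z g1 + Bcoef evl K d pe m Z g2"
proof -
  have "hfun evl K (g1 + g2) (Z i) = hfun evl K g1 (Z i) + hfun evl K g2 (Z i)"
    "kfun evl K d pe m (g1 + g2) (Z i) = kfun evl K d pe m g1 (Z i) + kfun evl K d pe m g2 (Z i)" for i
    using assms(2-4) unfolding data_integrable_def
    by (intro hfun_add kfun_add assms(1); auto)+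
  then show ?thesis by (simp add: Bcoef_def vec_eq_iff sum.distrib add_divide_distrib)
qed

lemma convex_image_Bcoef:
  assumes "\<And>a s u. linear (\<lambda>g. evl g a s u)" and "\<And>i. fst (snd (Z i)) < m"
    and "convex G" and "\<And>g. g \<in> G \<Longrightarrow> data_integrable evl K pe m Z g"
  shows "convex (Bcoef evl K d pe m Z ` G)"
proof (rule convexI)
  fix x y and u v :: real
  assume "x \<in> Bcoef evl K d pe m Z ` G" "y \<in> Bcoef evl K d pe m Z ` G" "0 \<le> u" "0 \<le> v" "u + v = 1"
  then obtain g1 g2 where "g1 \<in> G" "g2 \<in> G" "x = Bcoef evl K d pe m Z g1" "y = Bcoef evl K d pe m Z g2"
    and "u *\<^sub>R g1 + v *\<^sub>R g2 \<in> G" using convexD[OF \<open>convex G\<close>] by blast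
  moreover have "Bcoef evl K d pe m Z (u *\<^sub>R g1 + v *\<^sub>R g2) = u *\<^sub>R x + v *\<^sub>R y"
    using calculation
    by (simp add: Bcoef_add[OF assms(1,2)] Bcoef_scaleR[OF assms(1)]
        data_integrable_scaleR[OF assms(1)] assms(4))
  ultimately show "u *\<^sub>R x + v *\<^sub>R y \<in> Bcoef evl K d pe m Z ` G" by (metis image_eqI)
qed

lemma continuous_on_Bcoef:
  fixes Z :: "'n::finite \<Rightarrow> 's \<times> nat \<times> 's"
  assumes "\<And>z. continuous_on G (\<lambda>g. hfun evl K g z)"
    and "\<And>z. continuous_on G (\<lambda>g. kfun evl K d pe m g z)"
  shows "continuous_on G (Bcoef evl K d pe m Z)"
  unfolding Bcoef_def by (intro continuous_intros assms) auto

theorem lemma4: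
  fixes evl :: "'g::real_normed_vector \<Rightarrow> nat \<Rightarrow> 's::finite \<Rightarrow> 'u::topological_space \<Rightarrow> real"
    and K :: "'s \<times> nat \<times> 's \<Rightarrow> 'u measure"
    and d :: "'s \<Rightarrow> real"
    and pe :: "nat \<Rightarrow> 's \<Rightarrow> 'u \<Rightarrow> real"
    and m :: nat
    and Z :: "'n::finite \<Rightarrow> 's \<times> nat \<times> 's"
    and G :: "'g set"
    and lam M :: real
  assumes evl_linear: "\<And>a s u. linear (\<lambda>g. evl g a s u)" and evl_inj: "inj evl"
    and K_prob: "\<And>z. prob_space (K z)"
    and K_sets: "\<And>z. sets (K z) = sets borel"
    and actions: "\<And>i. fst (snd (Z i)) < m"
    and integrable_g: "\<And>g i a. g \<in> G \<Longrightarrow> a < m \<Longrightarrow>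
          integrable (K (Z i)) (\<lambda>u. evl g a (fst (Z i)) u)"
    and integrable_pe: "\<And>g i a. g \<in> G \<Longrightarrow> a < m \<Longrightarrow>
          integrable (K (Z i)) (\<lambda>u. pe a (fst (Z i)) u * evl g a (fst (Z i)) u)"
    and compactness: "compact G" "compact (normalized_class G)"
    and convexity: "convex G"
    and continuity_h: "\<And>z. continuous_on G (\<lambda>g. hfun evl K g z)"
    and continuity_k: "\<And>z. continuous_on G (\<lambda>g. kfun evl K d pe m g z)"
    and continuity_g: "\<And>g a s. g \<in> G \<Longrightarrow> continuous_on UNIV (\<lambda>u. evl g a s u)"
    and symmetry: "\<And>g. g \<in> G \<longleftrightarrow> - g \<in> G"
    and lam_nonneg: "lam \<ge> 0"
    and M_nonneg: "M \<ge> 0"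
  shows "Inf (range (\<lambda>W. Sup ((\<lambda>g. Jfun evl K d pe m Z lam W g) ` G)))
           \<le> Sup ((\<lambda>g. Inf ((\<lambda>W. (Bfun evl K d pe m Z W g)\<^sup>2) ` cball 0 M)) ` G)
             + lam / (real CARD('n))\<^sup>2 * M\<^sup>2"
proof -
  let ?b = "Bcoef evl K d pe m Z"
  have integrable: "data_integrable evl K pe m Z g" if "g \<in> G" for g
    using integrable_g integrable_pe that unfolding data_integrable_def by blast
  have B_eq: "Bfun evl K d pe m Z W g = inner W (fst (?b g)) - snd (?b g)" if "g \<in> G" for W g
    using Bfun_eq_inner_Bcoef[OF actions integrable[OF that]] .
  have "compact (?b ` G)"
    using compact_continuous_image[OF continuous_on_Bcoef[OF continuity_h continuity_k] compactness(1)] .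
  moreover have "convex (?b ` G)"
    using convex_image_Bcoef[OF evl_linear actions convexity integrable] .
  moreover have "- p \<in> ?b ` G" if "p \<in> ?b ` G" for p
  proof -
    obtain g where "g \<in> G" "p = ?b g" using \<open>p \<in> ?b ` G\<close> by blast
    then have "- p = ?b (- g)" by (simp add: Bcoef_uminus[OF evl_linear])
    with \<open>g \<in> G\<close> symmetry show ?thesis by blast
  qed
  ultimately show ?thesis
    using Inf_Sup_sq_affine_le_Sup_Inf_ball[of "?b ` G" "lam / (real CARD('n))\<^sup>2" M] lam_nonneg M_nonneg
    by (simp add: Jfun_def B_eq image_image cong: image_cong_simp)
qed

end
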